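(* For every matroid $M$, the Borsuk number of $M$ equals the Borsuk number of its matroid polytope: $f(M)=f(P_M)$.
   Context: For a matroid $M$ on ground set $E$, $\mathcal{B}(M)$ denotes its set of bases, and the distance between two bases $B,B'$ is $|B\triangle B'|$; $\operatorname{diam}$ denotes diameter. The Borsuk number $f(M)$ is the minimum number of parts in a partition of $\mathcal{B}(M)$ in which every part has diameter strictly smaller than $\operatorname{diam}(\mathcal{B}(M))$; if $M$ has exactly one basis, $f(M):=+\infty$. For $S\subseteq E$, $\chi^S\in\{0,1\}^E$ is its indicator vector. The matroid polytope $P_M\subset\mathbb{R}^E$ is the convex hull of $\{\chi^B: B\in\mathcal{B}(M)\}$. For a bounded set $S$ in Euclidean space, $f(S)$ is the minimum number of parts in a partition of $S$ into parts of Euclidean diameter strictly smaller than that of $S$ ($+\infty$ if none exists). *)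

theory Defs
  imports "HOL-Analysis.Analysis" "HOL-Library.Disjoint_Sets" "HOL-Library.Extended_Nat"
begin

definition is_matroid_bases :: "'a set \<Rightarrow> 'a set set \<Rightarrow> bool" where
  "is_matroid_bases E Bs \<longleftrightarrow> finite E \<and> Bs \<noteq> {} \<and> (\<forall>B\<in>Bs. B \<subseteq> E) \<and>
     (\<forall>B1\<in>Bs. \<forall>B2\<in>Bs. \<forall>x\<in>B1 - B2. \<exists>y\<in>B2 - B1. insert y (B1 - {x}) \<in> Bs)"

definition basis_dist :: "'a set \<Rightarrow> 'a set \<Rightarrow> nat" where
  "basis_dist B B' = card ((B - B') \<union> (B' - B))"

definition bases_diam :: "'a set set \<Rightarrow> nat" where
  "bases_diam X = Max ((\<lambda>(B, B'). basis_dist B B') ` (X \<times> X))"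

definition matroid_borsuk :: "'a set set \<Rightarrow> enat" where
  "matroid_borsuk Bs = (if card Bs = 1 then \<infinity> else
     Inf {enat (card P) | P. partition_on Bs P \<and> (\<forall>X\<in>P. bases_diam X < bases_diam Bs)})"

text \<open>Borsuk number of a set in Euclidean space (Inf {} = \<infinity>).\<close>
definition borsuk_number :: "('b::metric_space) set \<Rightarrow> enat" where
  "borsuk_number S = Inf {enat (card P) | P. finite P \<and> partition_on S P \<and>
      (\<forall>X\<in>P. diameter X < diameter S)}"

definition indicator_vec :: "('a::finite) set \<Rightarrow> real ^ 'a" where
  "indicator_vec B = (\<chi> i. if i \<in> B then 1 else 0)"

definition matroid_polytope :: "('a::finite) set set \<Rightarrow> (real ^ 'a) set" where
  "matroid_polytope Bs = convex hull (indicator_vec ` Bs)"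

end

theory Submission imports Defs begin

(* The vertex map B \<mapsto> \<chi>^B satisfies |\<chi>^B - \<chi>^C| = sqrt |B \<triangle> C|, so partitions of the bases
   correspond to partitions of the vertex set V of P_M, with the same comparisons of diameters;
   hence f(M) = f(V). Moreover diam (conv V) = diam V, so restricting a partition of conv V
   to V gives f(V) \<le> f(conv V). Conversely, if V is split into k parts of smaller diameter,
   put each x \<in> conv V into a part X carrying at least 1/k of its barycentric weight; two
   points sharing X are at distance at most diam V - (diam V - diam X)/k^2. *)

lemma dist_convex_combinations_le:
  fixes S :: "'a::real_normed_vector set"
  assumes "sum u S = 1" "sum w S = 1" "\<And>x. x \<in> S \<Longrightarrow> 0 \<le> u x" "\<And>y. y \<in> S \<Longrightarrow> 0 \<le> w y"
  shows "dist (\<Sum>x\<in>S. u x *\<^sub>R x) (\<Sum>y\<in>S. w y *\<^sub>R y) \<le> (\<Sum>x\<in>S. \<Sum>y\<in>S. u x * w y * dist x y)"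
proof -
  have "(\<Sum>x\<in>S. u x *\<^sub>R x) = (\<Sum>x\<in>S. \<Sum>y\<in>S. (u x * w y) *\<^sub>R x)"
    by (simp add: scaleR_sum_left[symmetric] sum_distrib_left[symmetric] assms mult.commute)
  moreover have "(\<Sum>y\<in>S. w y *\<^sub>R y) = (\<Sum>x\<in>S. \<Sum>y\<in>S. (u x * w y) *\<^sub>R y)"
    by (subst sum.swap) (simp add: scaleR_sum_left[symmetric] sum_distrib_right[symmetric] assms)
  ultimately have "dist (\<Sum>x\<in>S. u x *\<^sub>R x) (\<Sum>y\<in>S. w y *\<^sub>R y)
      = norm (\<Sum>x\<in>S. \<Sum>y\<in>S. (u x * w y) *\<^sub>R (x - y))"
    by (simp add: dist_norm scaleR_diff_right sum_subtractf)
  also have "\<dots> \<le> (\<Sum>x\<in>S. \<Sum>y\<in>S. norm ((u x * w y) *\<^sub>R (x - y)))"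
    by (intro order_trans[OF norm_sum] sum_mono norm_sum)
  also have "\<dots> = (\<Sum>x\<in>S. \<Sum>y\<in>S. u x * w y * dist x y)"
    using assms(3,4) by (intro sum.cong refl) (simp add: dist_norm)
  finally show ?thesis .
qed

lemma dist_convex_combinations_le_bound:
  fixes S :: "'a::real_normed_vector set"
  assumes "sum u S = 1" "sum w S = 1" "\<And>x. x \<in> S \<Longrightarrow> 0 \<le> u x" "\<And>y. y \<in> S \<Longrightarrow> 0 \<le> w y"
    and "\<And>x y. x \<in> S \<Longrightarrow> y \<in> S \<Longrightarrow> dist x y \<le> D"
  shows "dist (\<Sum>x\<in>S. u x *\<^sub>R x) (\<Sum>y\<in>S. w y *\<^sub>R y) \<le> D"
proof -
  have "dist (\<Sum>x\<in>S. u x *\<^sub>R x) (\<Sum>y\<in>S. w y *\<^sub>R y) \<le> (\<Sum>x\<in>S. \<Sum>y\<in>S. u x * w y * dist x y)"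
    using assms(1-4) by (rule dist_convex_combinations_le)
  also have "\<dots> \<le> (\<Sum>x\<in>S. \<Sum>y\<in>S. u x * w y * D)"
    using assms by (intro sum_mono mult_left_mono) auto
  also have "\<dots> = D"
    by (simp add: sum_distrib_right[symmetric] sum_distrib_left[symmetric] assms(1,2))
  finally show ?thesis .
qed

lemma dist_convex_combinations_concentrated_le:
  fixes S :: "'a::real_normed_vector set"
  assumes u: "sum u S = 1" "\<And>x. x \<in> S \<Longrightarrow> 0 \<le> u x"
    and w: "sum w S = 1" "\<And>y. y \<in> S \<Longrightarrow> 0 \<le> w y"
    and X: "X \<subseteq> S" "0 \<le> a" "a \<le> sum u X" "a \<le> sum w X"
    and "0 \<le> \<delta>"
    and far: "\<And>x y. x \<in> S \<Longrightarrow> y \<in> S \<Longrightarrow> dist x y \<le> D"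
    and near: "\<And>x y. x \<in> X \<Longrightarrow> y \<in> X \<Longrightarrow> dist x y \<le> D - \<delta>"
  shows "dist (\<Sum>x\<in>S. u x *\<^sub>R x) (\<Sum>y\<in>S. w y *\<^sub>R y) \<le> D - \<delta> * a\<^sup>2"
proof -
  let ?\<chi> = "\<lambda>x. of_bool (x \<in> X) :: real"
  have "finite S" using u(1) sum.infinite by fastforce
  have restrict: "(\<Sum>x\<in>S. f x * ?\<chi> x) = sum f X" for f :: "'a \<Rightarrow> real"
    using \<open>finite S\<close> X(1) by (simp add: Int_absorb1 Int_absorb2)
  have pointwise: "dist x y \<le> D - \<delta> * ?\<chi> x * ?\<chi> y" if "x \<in> S" "y \<in> S" for x y
    using far[OF that] near by (cases "x \<in> X \<and> y \<in> X") auto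
  have "dist (\<Sum>x\<in>S. u x *\<^sub>R x) (\<Sum>y\<in>S. w y *\<^sub>R y) \<le> (\<Sum>x\<in>S. \<Sum>y\<in>S. u x * w y * dist x y)"
    using u w by (intro dist_convex_combinations_le)
  also have "\<dots> \<le> (\<Sum>x\<in>S. \<Sum>y\<in>S. u x * w y * (D - \<delta> * ?\<chi> x * ?\<chi> y))"
    by (intro sum_mono mult_left_mono pointwise) (simp_all add: u w)
  also have "\<dots> = (\<Sum>x\<in>S. \<Sum>y\<in>S. D * (u x * w y) - \<delta> * ((u x * ?\<chi> x) * (w y * ?\<chi> y)))"
    by (simp add: algebra_simps)
  also have "\<dots> = D * (\<Sum>x\<in>S. \<Sum>y\<in>S. u x * w y) -
      \<delta> * (\<Sum>x\<in>S. \<Sum>y\<in>S. (u x * ?\<chi> x) * (w y * ?\<chi> y))"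
    by (simp add: sum_subtractf sum_distrib_left)
  also have "\<dots> = D * (sum u S * sum w S) -
      \<delta> * ((\<Sum>x\<in>S. u x * ?\<chi> x) * (\<Sum>y\<in>S. w y * ?\<chi> y))"
    by (simp only: sum_product)
  also have "\<dots> = D - \<delta> * (sum u X * sum w X)"
    by (simp only: restrict u w)
  also have "\<dots> \<le> D - \<delta> * a\<^sup>2"
    using X \<open>0 \<le> \<delta>\<close> by (simp add: power2_eq_square mult_left_mono mult_mono)
  finally show ?thesis .
qed

lemma diameter_convex_hull_finite:
  fixes V :: "'a::real_normed_vector set"
  assumes "finite V"
  shows "diameter (convex hull V) = diameter V"
proof (rule antisym)
  have "bounded V" using assms by (rule finite_imp_bounded)
  show "diameter (convex hull V) \<le> diameter V"
  proof (rule diameter_le)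
    show "convex hull V \<noteq> {} \<or> 0 \<le> diameter V"
      using \<open>bounded V\<close> by (simp add: diameter_ge_0)
    fix x y assume "x \<in> convex hull V" "y \<in> convex hull V"
    then obtain u w where "\<forall>v\<in>V. 0 \<le> u v" "sum u V = 1" "(\<Sum>v\<in>V. u v *\<^sub>R v) = x"
      and "\<forall>v\<in>V. 0 \<le> w v" "sum w V = 1" "(\<Sum>v\<in>V. w v *\<^sub>R v) = y"
      unfolding convex_hull_finite[OF assms] by blast
    then show "norm (x - y) \<le> diameter V"
      using dist_convex_combinations_le_bound[of u V w "diameter V"]
        diameter_bounded_bound[OF \<open>bounded V\<close>]
      by (auto simp: dist_norm)
  qed
  show "diameter V \<le> diameter (convex hull V)"
    using assms by (intro diameter_subset hull_subset finite_imp_bounded_convex_hull)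
qed

lemma partition_on_fibres:
  assumes "\<And>x. x \<in> A \<Longrightarrow> f x \<in> I"
  shows "partition_on A ((\<lambda>i. {x\<in>A. f x = i}) ` I - {{}})"
  using assms by (auto simp: partition_on_def disjoint_def)

lemma partition_on_obtains_heavy_part:
  fixes u :: "'a \<Rightarrow> real"
  assumes "finite A" "partition_on A P" "sum u A = 1"
  obtains X where "X \<in> P" "1 / card P \<le> sum u X"
proof (rule ccontr)
  assume "\<not> thesis"
  with that have light: "\<And>X. X \<in> P \<Longrightarrow> sum u X < 1 / card P" by force
  have "finite P" using assms(1,2) by (rule finite_elements)
  moreover have "P \<noteq> {}" using assms(2,3) by (auto simp: partition_on_def)
  ultimately have "sum u A < (\<Sum>X\<in>P. 1 / card P)"
    unfolding sum.partition[OF assms(1,2)] by (intro sum_strict_mono light)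
  also have "\<dots> = 1" using \<open>finite P\<close> \<open>P \<noteq> {}\<close> by simp
  finally show False using assms(3) by simp
qed

lemma card_image_minus_empty_le:
  "finite I \<Longrightarrow> card (F ` I - {{}}) \<le> card I"
  by (meson Diff_subset card_image_le card_mono finite_imageI order_trans)

lemma partition_on_image_obtains:
  assumes "inj_on f A" "partition_on (f ` A) Q"
  obtains P where "partition_on A P" "Q = (`) f ` P"
proof
  let ?g = "inv_into A f"
  have "inj_on ?g (f ` A)" by (simp add: inj_on_inv_into)
  from partition_on_inj_image[OF assms(2) this]
  have "partition_on A ((`) ?g ` Q - {{}})" using assms(1) by simp
  moreover have "{} \<notin> (`) ?g ` Q" using partition_onD3[OF assms(2)] by auto
  ultimately show "partition_on A ((`) ?g ` Q)" by simp
  have "f ` ?g ` B = B" if "B \<in> Q" for B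
    using that partition_onD1[OF assms(2)] by (intro image_inv_into_cancel) auto
  then have "(`) f ` (`) ?g ` Q = (\<lambda>B. B) ` Q" unfolding image_image by (rule image_cong[OF refl])
  then show "Q = (`) f ` (`) ?g ` Q" by simp
qed

lemma borsuk_number_subset_le:
  fixes S T :: "'a::metric_space set"
  assumes "bounded T" "S \<subseteq> T" "diameter S = diameter T"
  shows "borsuk_number S \<le> borsuk_number T"
  unfolding borsuk_number_def
proof (rule Inf_greatest, clarify)
  fix Q assume Q: "finite Q" "partition_on T Q" "\<forall>A\<in>Q. diameter A < diameter T"
  define Q' where "Q' = (\<inter>) S ` Q - {{}}"
  have "partition_on S Q'"
    using partition_on_restrict[OF Q(2), of S] assms(2) by (simp add: Q'_def Int_absorb2)
  moreover have "finite Q'" using Q(1) by (simp add: Q'_def)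
  moreover have "diameter A' < diameter S" if "A' \<in> Q'" for A'
  proof -
    obtain A where A: "A \<in> Q" "A' = S \<inter> A" using \<open>A' \<in> Q'\<close> by (auto simp: Q'_def)
    have "A \<subseteq> T" using Q(2) A(1) by (auto simp: partition_on_def)
    then have "bounded A" using assms(1) bounded_subset by blast
    then have "diameter A' \<le> diameter A" using A(2) by (intro diameter_subset) auto
    also have "\<dots> < diameter S" using Q(3) A(1) assms(3) by simp
    finally show ?thesis .
  qed
  ultimately have "enat (card Q') \<in>
      {enat (card P) |P. finite P \<and> partition_on S P \<and> (\<forall>X\<in>P. diameter X < diameter S)}"
    by blast
  moreover have "card Q' \<le> card Q" using Q(1) by (simp add: Q'_def card_image_minus_empty_le)
  ultimately show "Inf {enat (card P) |P. finite P \<and> partition_on S P \<and> (\<forall>X\<in>P. diameter X < diameter S)}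
      \<le> enat (card Q)"
    by (intro Inf_lower2) auto
qed

lemma borsuk_number_convex_hull_le:
  fixes V :: "'a::real_normed_vector set"
  assumes "finite V"
  shows "borsuk_number (convex hull V) \<le> borsuk_number V"
  unfolding borsuk_number_def diameter_convex_hull_finite[OF assms]
proof (rule Inf_greatest, clarify)
  fix P assume P: "finite P" "partition_on V P" "\<forall>X\<in>P. diameter X < diameter V"
  let ?K = "convex hull V" and ?k = "real (card P)"
  define heavy where "heavy x X \<longleftrightarrow> (\<exists>u. (\<forall>v\<in>V. 0 \<le> u v) \<and> sum u V = 1 \<and>
      (\<Sum>v\<in>V. u v *\<^sub>R v) = x \<and> 1 / ?k \<le> sum u X)" for x X
  have "\<forall>x\<in>?K. \<exists>X. X \<in> P \<and> heavy x X"
  proof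
    fix x assume "x \<in> ?K"
    then obtain u where u: "\<forall>v\<in>V. 0 \<le> u v" "sum u V = 1" "(\<Sum>v\<in>V. u v *\<^sub>R v) = x"
      unfolding convex_hull_finite[OF assms] by blast
    obtain X where "X \<in> P" "1 / ?k \<le> sum u X"
      using partition_on_obtains_heavy_part[OF assms P(2) u(2)] .
    with u show "\<exists>X. X \<in> P \<and> heavy x X" unfolding heavy_def by blast
  qed
  then obtain part where part: "\<forall>x\<in>?K. part x \<in> P \<and> heavy x (part x)"
    by (rule bchoice[THEN exE])
  define Q where "Q = (\<lambda>X. {x\<in>?K. part x = X}) ` P - {{}}"
  have "partition_on ?K Q" unfolding Q_def by (rule partition_on_fibres) (use part in blast)
  moreover have "finite Q" using P(1) by (simp add: Q_def)
  moreover have "diameter A < diameter V" if "A \<in> Q" for A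
  proof -
    obtain X where X: "X \<in> P" "A = {x\<in>?K. part x = X}" "A \<noteq> {}"
      using \<open>A \<in> Q\<close> by (auto simp: Q_def)
    have "X \<subseteq> V" using P(2) X(1) by (auto simp: partition_on_def)
    have "0 < ?k" using P(1) X(1) by (auto simp: card_gt_0_iff)
    have "bounded V" using assms by (rule finite_imp_bounded)
    then have "bounded X" using \<open>X \<subseteq> V\<close> by (rule bounded_subset)
    define \<delta> where "\<delta> = diameter V - diameter X"
    have "0 < \<delta>" using P(3) X(1) by (simp add: \<delta>_def)
    have "dist x y \<le> diameter V - \<delta> * (1 / ?k)\<^sup>2" if "x \<in> A" "y \<in> A" for x y
    proof -
      have "heavy x X" "heavy y X" using that X(2) part by auto
      then obtain u w where u: "\<forall>v\<in>V. 0 \<le> u v" "sum u V = 1" "(\<Sum>v\<in>V. u v *\<^sub>R v) = x"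
          "1 / ?k \<le> sum u X"
        and w: "\<forall>v\<in>V. 0 \<le> w v" "sum w V = 1" "(\<Sum>v\<in>V. w v *\<^sub>R v) = y" "1 / ?k \<le> sum w X"
        unfolding heavy_def by blast
      have "dist (\<Sum>v\<in>V. u v *\<^sub>R v) (\<Sum>v\<in>V. w v *\<^sub>R v) \<le> diameter V - \<delta> * (1 / ?k)\<^sup>2"
      proof (rule dist_convex_combinations_concentrated_le)
        show "dist v v' \<le> diameter V" if "v \<in> V" "v' \<in> V" for v v'
          using diameter_bounded_bound[OF \<open>bounded V\<close> that] .
        show "dist v v' \<le> diameter V - \<delta>" if "v \<in> X" "v' \<in> X" for v v'
          using diameter_bounded_bound[OF \<open>bounded X\<close> that] by (simp add: \<delta>_def)
      qed (use u w \<open>X \<subseteq> V\<close> \<open>0 < \<delta>\<close> in auto)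
      then show ?thesis using u(3) w(3) by simp
    qed
    then have "diameter A \<le> diameter V - \<delta> * (1 / ?k)\<^sup>2"
      using X(3) by (intro diameter_le) (auto simp: dist_norm)
    also have "\<dots> < diameter V" using \<open>0 < \<delta>\<close> \<open>0 < ?k\<close> by simp
    finally show ?thesis .
  qed
  ultimately have "enat (card Q) \<in>
      {enat (card Q') |Q'. finite Q' \<and> partition_on ?K Q' \<and> (\<forall>A\<in>Q'. diameter A < diameter V)}"
    by blast
  moreover have "card Q \<le> card P" using P(1) by (simp add: Q_def card_image_minus_empty_le)
  ultimately show "Inf {enat (card Q') |Q'. finite Q' \<and> partition_on ?K Q' \<and>
      (\<forall>A\<in>Q'. diameter A < diameter V)} \<le> enat (card P)"
    by (intro Inf_lower2[of "enat (card Q)"]) auto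
qed

lemma borsuk_number_convex_hull:
  fixes V :: "'a::real_normed_vector set"
  assumes "finite V"
  shows "borsuk_number (convex hull V) = borsuk_number V"
proof (rule antisym)
  show "borsuk_number (convex hull V) \<le> borsuk_number V"
    using assms by (rule borsuk_number_convex_hull_le)
  show "borsuk_number V \<le> borsuk_number (convex hull V)"
    using finite_imp_bounded_convex_hull[OF assms] hull_subset[of V convex]
      diameter_convex_hull_finite[OF assms]
    by (intro borsuk_number_subset_le) auto
qed

lemma indicator_vec_nth [simp]: "indicator_vec B $ i = (if i \<in> B then 1 else 0)"
  by (simp add: indicator_vec_def)

lemma inj_indicator_vec: "inj indicator_vec"
proof (rule injI)
  fix B C :: "'a::finite set"
  assume "indicator_vec B = indicator_vec C"
  then have "\<forall>i. indicator_vec B $ i = indicator_vec C $ i" by simp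
  then show "B = C" by (auto split: if_splits)
qed

lemma dist_indicator_vec: "dist (indicator_vec B) (indicator_vec C) = sqrt (basis_dist B C)"
proof -
  have "dist (indicator_vec B) (indicator_vec C) =
      sqrt (\<Sum>i\<in>UNIV. (indicator_vec B $ i - indicator_vec C $ i)\<^sup>2)"
    by (simp add: dist_norm norm_vec_def L2_set_def)
  also have "(\<Sum>i\<in>UNIV. (indicator_vec B $ i - indicator_vec C $ i)\<^sup>2) =
      (\<Sum>i\<in>UNIV. of_bool (i \<in> (B - C) \<union> (C - B)) :: real)"
    by (rule sum.cong) auto
  also have "\<dots> = real (card (UNIV \<inter> {i. i \<in> (B - C) \<union> (C - B)}))"
    by (rule sum_of_bool_eq) simp_all
  also have "\<dots> = basis_dist B C" by (simp only: basis_dist_def Int_UNIV_left Collect_mem_eq)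
  finally show ?thesis .
qed

lemma basis_dist_le_bases_diam:
  "finite X \<Longrightarrow> B \<in> X \<Longrightarrow> C \<in> X \<Longrightarrow> basis_dist B C \<le> bases_diam X"
  unfolding bases_diam_def by (rule Max_ge) force+

lemma bases_diam_attained:
  assumes "finite X" "X \<noteq> {}"
  obtains B C where "B \<in> X" "C \<in> X" "basis_dist B C = bases_diam X"
proof -
  have "bases_diam X \<in> (\<lambda>(B, C). basis_dist B C) ` (X \<times> X)"
    unfolding bases_diam_def using assms by (intro Max_in) auto
  then show ?thesis using that by auto
qed

lemma diameter_indicator_vec_image:
  fixes X :: "'a::finite set set"
  assumes "X \<noteq> {}"
  shows "diameter (indicator_vec ` X) = sqrt (bases_diam X)"
proof (rule antisym)
  show "diameter (indicator_vec ` X) \<le> sqrt (bases_diam X)"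
    by (rule diameter_le)
      (auto simp: dist_norm[symmetric] dist_indicator_vec basis_dist_le_bases_diam)
  obtain B C where "B \<in> X" "C \<in> X" "basis_dist B C = bases_diam X"
    using bases_diam_attained[of X] assms by auto
  then show "sqrt (bases_diam X) \<le> diameter (indicator_vec ` X)"
    using diameter_bounded_bound[of "indicator_vec ` X" "indicator_vec B" "indicator_vec C"]
    by (simp add: dist_indicator_vec finite_imp_bounded)
qed

(* The case card Bs = 1 of the definition is subsumed: a single basis has diameter 0,
   so no partition qualifies and Inf {} = \<infinity>. *)
lemma matroid_borsuk_eq_Inf:
  assumes "Bs \<noteq> {}"
  shows "matroid_borsuk Bs =
    Inf {enat (card P) | P. partition_on Bs P \<and> (\<forall>X\<in>P. bases_diam X < bases_diam Bs)}"
proof (cases "card Bs = 1")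
  case True
  then obtain B where "Bs = {B}" by (auto simp: card_Suc_eq)
  then have "{enat (card P) | P. partition_on Bs P \<and> (\<forall>X\<in>P. bases_diam X < bases_diam Bs)} = {}"
    by (auto simp: bases_diam_def basis_dist_def partition_on_def)
  with True show ?thesis unfolding matroid_borsuk_def by (metis Inf_empty top_enat_def)
qed (simp add: matroid_borsuk_def)

lemma matroid_borsuk_eq_borsuk_number_vertices:
  fixes Bs :: "'a::finite set set"
  assumes "Bs \<noteq> {}"
  shows "matroid_borsuk Bs = borsuk_number (indicator_vec ` Bs)"
proof -
  let ?V = "indicator_vec ` Bs"
  have inj: "inj_on indicator_vec Bs" using inj_indicator_vec by (rule inj_on_subset) simp
  have card_parts: "card ((`) indicator_vec ` P) = card P" if "partition_on Bs P" for P
    using that inj_on_subset[OF inj_on_image_Pow[OF inj]]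
    by (intro card_image) (auto simp: partition_on_def)
  have small_iff: "diameter (indicator_vec ` X) < diameter ?V \<longleftrightarrow> bases_diam X < bases_diam Bs"
    if "partition_on Bs P" "X \<in> P" for P X
  proof -
    have "X \<noteq> {}" using partition_onD3[OF that(1)] that(2) by blast
    then show ?thesis using assms by (simp add: diameter_indicator_vec_image)
  qed
  have "{enat (card P) | P. partition_on Bs P \<and> (\<forall>X\<in>P. bases_diam X < bases_diam Bs)} =
      {enat (card Q) | Q. finite Q \<and> partition_on ?V Q \<and> (\<forall>A\<in>Q. diameter A < diameter ?V)}"
  proof (intro equalityI subsetI; clarify)
    fix P assume P: "partition_on Bs P" "\<forall>X\<in>P. bases_diam X < bases_diam Bs"
    have "(`) indicator_vec ` P - {{}} = (`) indicator_vec ` P"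
      using partition_onD3[OF P(1)] by auto
    then have "partition_on ?V ((`) indicator_vec ` P)"
      using partition_on_inj_image[OF P(1) inj] by simp
    moreover have "\<forall>A\<in>(`) indicator_vec ` P. diameter A < diameter ?V"
      using P(2) by (auto simp: small_iff[OF P(1)])
    ultimately show "\<exists>Q. enat (card P) = enat (card Q) \<and> finite Q \<and> partition_on ?V Q \<and>
        (\<forall>A\<in>Q. diameter A < diameter ?V)"
      using card_parts[OF P(1)] by (intro exI[of _ "(`) indicator_vec ` P"]) auto
  next
    fix Q assume Q: "finite Q" "partition_on ?V Q" "\<forall>A\<in>Q. diameter A < diameter ?V"
    obtain P where P: "partition_on Bs P" "Q = (`) indicator_vec ` P"
      using partition_on_image_obtains[OF inj Q(2)] .
    have "\<forall>X\<in>P. bases_diam X < bases_diam Bs"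
      using Q(3) unfolding P(2) by (auto simp: small_iff[OF P(1)])
    then show "\<exists>P. enat (card Q) = enat (card P) \<and> partition_on Bs P \<and>
        (\<forall>X\<in>P. bases_diam X < bases_diam Bs)"
      using P card_parts by blast
  qed
  then show ?thesis by (simp add: matroid_borsuk_eq_Inf[OF assms] borsuk_number_def)
qed

theorem proposition2p2:
  fixes E :: "'a::finite set" and Bs :: "'a set set"
  assumes "is_matroid_bases E Bs"
  shows "matroid_borsuk Bs = borsuk_number (matroid_polytope Bs)"
proof -
  have "Bs \<noteq> {}" using assms by (simp add: is_matroid_bases_def)
  then have "matroid_borsuk Bs = borsuk_number (indicator_vec ` Bs)"
    by (rule matroid_borsuk_eq_borsuk_number_vertices)
  also have "\<dots> = borsuk_number (convex hull (indicator_vec ` Bs))"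
    by (simp add: borsuk_number_convex_hull)
  finally show ?thesis by (simp add: matroid_polytope_def)
qed

end
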